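(* Assume (A1) and (A2). For all $x,v,\tilde x,\tilde v\in\mathbb R^d$, \[|H(x,v)-H(\tilde x,\tilde v)|\le C_{dH,1}\,r(x,\tilde x,v,\tilde v)+C_{dH,2}\,r(x,\tilde x,v,\tilde v)\Big(\sqrt{H(x,v)}+\sqrt{H(\tilde x,\tilde v)}\Big),\] where $C_{dH,1}=\frac{24|\nabla U(0)|}\alpha$ and $C_{dH,2}=\frac{24L_U}{\alpha\sqrt\lambda}+\frac{6(1-\gamma)+\lambda-3}{\alpha\sqrt\lambda}+2\sqrt3\max\big(1,\frac1{2\alpha}\big)$.
   Context: $U\in\mathcal C^1(\mathbb R^d)$. (A1): $U\ge0$ and there exist $\lambda>0$, $A\ge0$ with $\tfrac12\nabla U(x)\cdot x\ge\lambda(U(x)+|x|^2/4)-A$ for all $x$. (A2): $\nabla U$ is $L_U$-Lipschitz, $L_U>0$. Set $\gamma=\frac{\lambda}{2(\lambda+1)}$, $H(x,v)=24U(x)+(6(1-\gamma)+\lambda)|x|^2+12x\cdot v+12|v|^2$, $\alpha=L_U+\frac\lambda4$, and $r(x,\tilde x,v,\tilde v)=\alpha|x-\tilde x|+|x-\tilde x+v-\tilde v|$. *)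

theory Defs
  imports "HOL-Analysis.Analysis"
begin

definition gam :: "real \<Rightarrow> real" where
  "gam lam = lam / (2 * (lam + 1))"

definition Hfun :: "('a::euclidean_space \<Rightarrow> real) \<Rightarrow> real \<Rightarrow> 'a \<Rightarrow> 'a \<Rightarrow> real" where
  "Hfun U lam x v = 24 * U x + (6 * (1 - gam lam) + lam) * (norm x)\<^sup>2 + 12 * (x \<bullet> v) + 12 * (norm v)\<^sup>2"

definition rdist :: "real \<Rightarrow> 'a::euclidean_space \<Rightarrow> 'a \<Rightarrow> 'a \<Rightarrow> 'a \<Rightarrow> real" where
  "rdist \<alpha> x x' v v' = \<alpha> * norm (x - x') + norm (x - x' + v - v')"

end

theory Submission
  imports Defs
begin

text \<open>Completing the square, H(x,v) = 24 U(x) + c |x|^2 + 12 |x/2 + v|^2 with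
  c = 6(1 - \<gamma>) + \<lambda> - 3 \<ge> \<lambda>, since \<gamma> \<le> 1/2. Each of the three terms of H(x,v) - H(x',v')
  is bounded by a distance times a sum of sizes: |U x - U x'| \<le> (|\<nabla>U(0)| + L(|x| + |x'|)) |x - x'|
  and |a|^2 - |b|^2 \<le> |a - b| (|a| + |b|). The distances |x - x'| and |(x/2 + v) - (x'/2 + v')|
  are at most multiples of r, while |x| \<le> \<surd>H / \<surd>\<lambda> and |x/2 + v| \<le> \<surd>H / \<surd>12
  because all three terms of H are nonnegative.\<close>

lemma abs_diff_le_of_lipschitz_gradient:
  fixes f :: "'a::euclidean_space \<Rightarrow> real" and f' :: "'a \<Rightarrow> 'a"
  assumes deriv: "\<And>x. (f has_derivative (\<lambda>h. f' x \<bullet> h)) (at x)"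
    and "L \<ge> 0"
    and lipschitz: "\<And>x y. norm (f' x - f' y) \<le> L * norm (x - y)"
  shows "\<bar>f x - f y\<bar> \<le> (norm (f' 0) + L * (norm x + norm y)) * norm (x - y)"
proof -
  let ?B = "norm (f' 0) + L * (norm x + norm y)"
  have segment: "closed_segment y x \<subseteq> cball 0 (max (norm x) (norm y))"
    by (rule closed_segment_subset) auto
  have "norm (f x - f y) \<le> ?B * norm (x - y)"
  proof (rule differentiable_bound[where f' = "\<lambda>z h. f' z \<bullet> h"])
    show "(f has_derivative (\<lambda>h. f' z \<bullet> h)) (at z within closed_segment y x)" for z
      using deriv has_derivative_at_withinI by blast
    show "onorm (\<lambda>h. f' z \<bullet> h) \<le> ?B" if "z \<in> closed_segment y x" for z
    proof (rule onorm_le)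
      fix h
      have "norm z \<le> max (norm x) (norm y)"
        using segment that by auto
      then have "norm z \<le> norm x + norm y"
        by (metis max_def norm_ge_zero add_increasing add_increasing2 order_trans)
      then have "norm (f' z) \<le> ?B"
        using lipschitz[of z 0] norm_triangle_ineq[of "f' 0" "f' z - f' 0"]
          mult_left_mono[of "norm z" "norm x + norm y" L] \<open>L \<ge> 0\<close> by simp
      then show "norm (f' z \<bullet> h) \<le> ?B * norm h"
        using Cauchy_Schwarz_ineq2[of "f' z" h] mult_right_mono[of "norm (f' z)" ?B "norm h"]
        by simp
    qed
  qed auto
  then show ?thesis by simp
qed

lemma abs_norm_power2_diff_le:
  fixes a b :: "'a::real_normed_vector"
  shows "\<bar>(norm a)\<^sup>2 - (norm b)\<^sup>2\<bar> \<le> norm (a - b) * (norm a + norm b)"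
proof -
  have "(norm a)\<^sup>2 - (norm b)\<^sup>2 = (norm a - norm b) * (norm a + norm b)"
    by (simp add: power2_eq_square algebra_simps)
  then have "\<bar>(norm a)\<^sup>2 - (norm b)\<^sup>2\<bar> = \<bar>norm a - norm b\<bar> * (norm a + norm b)"
    by (simp add: abs_mult)
  also have "\<dots> \<le> norm (a - b) * (norm a + norm b)"
    by (rule mult_right_mono) (auto simp: norm_triangle_ineq3)
  finally show ?thesis .
qed

lemma gam_le_half: "lam \<ge> 0 \<Longrightarrow> gam lam \<le> 1/2"
  by (simp add: gam_def field_simps)

lemma Hfun_eq_completed_square:
  "Hfun U lam x v =
     24 * U x + (6 * (1 - gam lam) + lam - 3) * (norm x)\<^sup>2 + 12 * (norm ((1/2) *\<^sub>R x + v))\<^sup>2"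
  by (simp add: Hfun_def power2_norm_eq_inner inner_add_left inner_add_right
      inner_commute algebra_simps)

lemma
  assumes "U x \<ge> 0" and "lam \<ge> 0"
  shows Hfun_ge_norm: "lam * (norm x)\<^sup>2 \<le> Hfun U lam x v"
    and Hfun_ge_shifted_norm: "12 * (norm ((1/2) *\<^sub>R x + v))\<^sup>2 \<le> Hfun U lam x v"
    and Hfun_nonneg: "0 \<le> Hfun U lam x v"
proof -
  have "lam \<le> 6 * (1 - gam lam) + lam - 3"
    using gam_le_half[OF \<open>lam \<ge> 0\<close>] by simp
  then have "lam * (norm x)\<^sup>2 \<le> (6 * (1 - gam lam) + lam - 3) * (norm x)\<^sup>2"
    by (simp add: mult_right_mono)
  moreover have "0 \<le> lam * (norm x)\<^sup>2"
    using \<open>lam \<ge> 0\<close> by simp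
  ultimately show "lam * (norm x)\<^sup>2 \<le> Hfun U lam x v"
    and "12 * (norm ((1/2) *\<^sub>R x + v))\<^sup>2 \<le> Hfun U lam x v" and "0 \<le> Hfun U lam x v"
    using \<open>U x \<ge> 0\<close> zero_le_power2[of "norm ((1/2) *\<^sub>R x + v)"]
    unfolding Hfun_eq_completed_square by linarith+
qed

lemma
  assumes "U x \<ge> 0" and "lam \<ge> 0"
  shows sqrt_Hfun_ge_norm: "sqrt lam * norm x \<le> sqrt (Hfun U lam x v)"
    and sqrt_Hfun_ge_shifted_norm:
      "12 * norm ((1/2) *\<^sub>R x + v) \<le> 2 * sqrt 3 * sqrt (Hfun U lam x v)"
proof -
  have sqrt_mono: "sqrt c * t \<le> sqrt (Hfun U lam x v)" if "c * t\<^sup>2 \<le> Hfun U lam x v" "t \<ge> 0"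
    for c t :: real
    using that real_sqrt_le_mono[OF that(1)] by (simp add: real_sqrt_mult)
  show "sqrt lam * norm x \<le> sqrt (Hfun U lam x v)"
    using Hfun_ge_norm[where U = U and x = x, OF assms] by (rule sqrt_mono) simp
  have "sqrt 12 * norm ((1/2) *\<^sub>R x + v) \<le> sqrt (Hfun U lam x v)"
    using Hfun_ge_shifted_norm[where U = U and x = x, OF assms] by (rule sqrt_mono) simp
  then have "sqrt 12 * (sqrt 12 * norm ((1/2) *\<^sub>R x + v)) \<le> sqrt 12 * sqrt (Hfun U lam x v)"
    by (rule mult_left_mono) simp
  then have "12 * norm ((1/2) *\<^sub>R x + v) \<le> sqrt 12 * sqrt (Hfun U lam x v)"
    by (simp add: mult.assoc[symmetric])
  also have "sqrt (12::real) = 2 * sqrt 3"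
    using real_sqrt_mult[of "2\<^sup>2" 3] by simp
  finally show "12 * norm ((1/2) *\<^sub>R x + v) \<le> 2 * sqrt 3 * sqrt (Hfun U lam x v)" .
qed

lemma abs_Hfun_diff_le_sum:
  assumes "lam \<ge> 0"
  shows "\<bar>Hfun U lam x v - Hfun U lam x' v'\<bar>
    \<le> 24 * \<bar>U x - U x'\<bar> + (6 * (1 - gam lam) + lam - 3) * \<bar>(norm x)\<^sup>2 - (norm x')\<^sup>2\<bar>
      + 12 * \<bar>(norm ((1/2) *\<^sub>R x + v))\<^sup>2 - (norm ((1/2) *\<^sub>R x' + v'))\<^sup>2\<bar>"
proof -
  define c where "c = 6 * (1 - gam lam) + lam - 3"
  have "0 \<le> c"
    using gam_le_half[OF assms] assms by (simp add: c_def)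
  have "Hfun U lam x v - Hfun U lam x' v' = 24 * (U x - U x') + c * ((norm x)\<^sup>2 - (norm x')\<^sup>2)
      + 12 * ((norm ((1/2) *\<^sub>R x + v))\<^sup>2 - (norm ((1/2) *\<^sub>R x' + v'))\<^sup>2)"
    unfolding Hfun_eq_completed_square c_def by (simp add: algebra_simps)
  also have "\<bar>\<dots>\<bar> \<le> \<bar>24 * (U x - U x')\<bar> + \<bar>c * ((norm x)\<^sup>2 - (norm x')\<^sup>2)\<bar>
      + \<bar>12 * ((norm ((1/2) *\<^sub>R x + v))\<^sup>2 - (norm ((1/2) *\<^sub>R x' + v'))\<^sup>2)\<bar>"
    by linarith
  finally show ?thesis
    unfolding c_def[symmetric] by (simp only: abs_mult abs_numeral abs_of_nonneg[OF \<open>0 \<le> c\<close>])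
qed

lemma norm_diff_le_rdist:
  "\<alpha> > 0 \<Longrightarrow> norm (x - x') \<le> rdist \<alpha> x x' v v' / \<alpha>"
  by (simp add: rdist_def field_simps)

lemma norm_shifted_diff_le_rdist:
  assumes "\<alpha> > 0"
  shows "norm (((1/2) *\<^sub>R x + v) - ((1/2) *\<^sub>R x' + v'))
    \<le> max 1 (1 / (2 * \<alpha>)) * rdist \<alpha> x x' v v'"
proof -
  define M where "M = max 1 (1 / (2 * \<alpha>))"
  have "((1/2) *\<^sub>R x + v) - ((1/2) *\<^sub>R x' + v') = (x - x' + v - v') - (1/2) *\<^sub>R (x - x')"
    by (simp add: algebra_simps flip: scaleR_add_left)
  then have "norm (((1/2) *\<^sub>R x + v) - ((1/2) *\<^sub>R x' + v'))
      \<le> norm (x - x' + v - v') + norm ((1/2) *\<^sub>R (x - x'))"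
    by (metis norm_triangle_ineq4)
  also have "\<dots> = norm (x - x' + v - v') + (1/2) * norm (x - x')"
    by simp
  also have "\<dots> \<le> M * norm (x - x' + v - v') + (M * \<alpha>) * norm (x - x')"
  proof -
    have "1 \<le> M" and "1/2 \<le> M * \<alpha>"
      using assms by (auto simp: M_def field_simps max_def)
    then show ?thesis
      using mult_right_mono[OF \<open>1 \<le> M\<close> norm_ge_zero[of "x - x' + v - v'"]]
        mult_right_mono[OF \<open>1/2 \<le> M * \<alpha>\<close> norm_ge_zero[of "x - x'"]] by simp
  qed
  also have "\<dots> = M * rdist \<alpha> x x' v v'"
    by (simp add: rdist_def algebra_simps)
  finally show ?thesis
    unfolding M_def .
qed

lemma abs_Hfun_diff_le_rdist:
  fixes U :: "'a::euclidean_space \<Rightarrow> real" and gradU :: "'a \<Rightarrow> 'a" and x v x' v' :: 'a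
  assumes grad: "\<And>x. (U has_derivative (\<lambda>h. gradU x \<bullet> h)) (at x)"
    and U_nonneg: "\<And>x. U x \<ge> 0" and "lam > 0" and "L \<ge> 0"
    and lipschitz: "\<And>x y. norm (gradU x - gradU y) \<le> L * norm (x - y)"
    and "\<alpha> > 0"
  defines "r \<equiv> rdist \<alpha> x x' v v'"
    and "S \<equiv> sqrt (Hfun U lam x v) + sqrt (Hfun U lam x' v')"
  shows "\<bar>Hfun U lam x v - Hfun U lam x' v'\<bar>
    \<le> 24 * norm (gradU 0) / \<alpha> * r
      + (24 * L / (\<alpha> * sqrt lam) + (6 * (1 - gam lam) + lam - 3) / (\<alpha> * sqrt lam)
         + 2 * sqrt 3 * max 1 (1 / (2 * \<alpha>))) * r * S"
proof -
  define c where "c = 6 * (1 - gam lam) + lam - 3"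
  define M where "M = max 1 (1 / (2 * \<alpha>))"
  define z where "z = (1/2) *\<^sub>R x + v"
  define z' where "z' = (1/2) *\<^sub>R x' + v'"
  have "lam \<ge> 0" "0 \<le> c" "0 \<le> r"
    using \<open>lam > 0\<close> gam_le_half[of lam] \<open>\<alpha> > 0\<close> by (auto simp: c_def r_def rdist_def)
  have dist_x: "norm (x - x') \<le> r / \<alpha>"
    unfolding r_def using \<open>\<alpha> > 0\<close> by (rule norm_diff_le_rdist)
  have dist_z: "norm (z - z') \<le> M * r"
    unfolding z_def z'_def M_def r_def using \<open>\<alpha> > 0\<close> by (rule norm_shifted_diff_le_rdist)
  have size_x: "norm x + norm x' \<le> S / sqrt lam"
    using sqrt_Hfun_ge_norm[of U x lam v] sqrt_Hfun_ge_norm[of U x' lam v'] U_nonneg \<open>lam > 0\<close>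
    by (simp add: S_def field_simps)
  have size_z: "12 * (norm z + norm z') \<le> 2 * sqrt 3 * S"
    using sqrt_Hfun_ge_shifted_norm[of U x lam v] sqrt_Hfun_ge_shifted_norm[of U x' lam v']
      U_nonneg \<open>lam \<ge> 0\<close> by (simp add: S_def z_def z'_def algebra_simps)
  have "0 \<le> S"
    using Hfun_nonneg[of U x lam v] Hfun_nonneg[of U x' lam v'] U_nonneg \<open>lam \<ge> 0\<close>
    by (simp add: S_def)
  have term_U: "\<bar>U x - U x'\<bar> \<le> (norm (gradU 0) + L * (S / sqrt lam)) * (r / \<alpha>)"
  proof -
    have "\<bar>U x - U x'\<bar> \<le> (norm (gradU 0) + L * (norm x + norm x')) * norm (x - x')"
      by (rule abs_diff_le_of_lipschitz_gradient[OF grad \<open>L \<ge> 0\<close> lipschitz])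
    also have "\<dots> \<le> (norm (gradU 0) + L * (S / sqrt lam)) * (r / \<alpha>)"
      using dist_x size_x \<open>L \<ge> 0\<close> \<open>0 \<le> S\<close> \<open>lam > 0\<close>
      by (intro mult_mono add_left_mono mult_left_mono) auto
    finally show ?thesis .
  qed
  have term_x: "\<bar>(norm x)\<^sup>2 - (norm x')\<^sup>2\<bar> \<le> (r / \<alpha>) * (S / sqrt lam)"
  proof -
    have "\<bar>(norm x)\<^sup>2 - (norm x')\<^sup>2\<bar> \<le> norm (x - x') * (norm x + norm x')"
      by (rule abs_norm_power2_diff_le)
    also have "\<dots> \<le> (r / \<alpha>) * (S / sqrt lam)"
      using dist_x size_x \<open>0 \<le> r\<close> \<open>\<alpha> > 0\<close> by (intro mult_mono) auto
    finally show ?thesis .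
  qed
  have term_z: "12 * \<bar>(norm z)\<^sup>2 - (norm z')\<^sup>2\<bar> \<le> (M * r) * (2 * sqrt 3 * S)"
  proof -
    have "12 * \<bar>(norm z)\<^sup>2 - (norm z')\<^sup>2\<bar> \<le> norm (z - z') * (12 * (norm z + norm z'))"
      using mult_left_mono[OF abs_norm_power2_diff_le[of z z'], of 12] by (simp add: algebra_simps)
    also have "\<dots> \<le> (M * r) * (2 * sqrt 3 * S)"
      by (rule mult_mono[OF dist_z size_z]) (use \<open>0 \<le> r\<close> in \<open>auto simp: M_def\<close>)
    finally show ?thesis .
  qed
  have "\<bar>Hfun U lam x v - Hfun U lam x' v'\<bar>
      \<le> 24 * ((norm (gradU 0) + L * (S / sqrt lam)) * (r / \<alpha>))
        + c * ((r / \<alpha>) * (S / sqrt lam)) + (M * r) * (2 * sqrt 3 * S)"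
    using abs_Hfun_diff_le_sum[OF \<open>lam \<ge> 0\<close>, of U x v x' v'] term_U term_z
      mult_left_mono[OF term_x \<open>0 \<le> c\<close>]
    unfolding c_def[symmetric] z_def[symmetric] z'_def[symmetric] by argo
  also have "\<dots> = 24 * norm (gradU 0) / \<alpha> * r
      + (24 * L / (\<alpha> * sqrt lam) + c / (\<alpha> * sqrt lam) + 2 * sqrt 3 * M) * r * S"
    using \<open>\<alpha> > 0\<close> \<open>lam > 0\<close> by (simp add: field_simps)
  finally show ?thesis
    unfolding c_def M_def .
qed

theorem lemma2p7:
  fixes U :: "'a::euclidean_space \<Rightarrow> real" and gradU :: "'a \<Rightarrow> 'a"
    and lam A L\<^sub>U :: real
  assumes grad: "\<And>x. (U has_derivative (%h. gradU x \<bullet> h)) (at x)"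
    and C1: "continuous_on UNIV gradU"
    and A1_nonneg: "\<And>x. U x \<ge> 0"
    and A1_lam: "lam > 0" and A1_A: "A \<ge> 0"
    and A1: "\<And>x. (1/2) * (gradU x \<bullet> x) \<ge> lam * (U x + (norm x)\<^sup>2 / 4) - A"
    and A2_L: "L\<^sub>U > 0"
    and A2: "\<And>x y. norm (gradU x - gradU y) \<le> L\<^sub>U * norm (x - y)"
  shows "\<forall>x v x' v'.
    let \<gamma> = gam lam; \<alpha> = L\<^sub>U + lam / 4;
        C1 = 24 * norm (gradU 0) / \<alpha>;
        C2 = 24 * L\<^sub>U / (\<alpha> * sqrt lam) + (6 * (1 - \<gamma>) + lam - 3) / (\<alpha> * sqrt lam)
             + 2 * sqrt 3 * max 1 (1 / (2 * \<alpha>));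
        r = rdist \<alpha> x x' v v'
    in \<bar>Hfun U lam x v - Hfun U lam x' v'\<bar>
       \<le> C1 * r + C2 * r * (sqrt (Hfun U lam x v) + sqrt (Hfun U lam x' v'))"
proof -
  have "L\<^sub>U + lam / 4 > 0"
    using A1_lam A2_L by simp
  then show ?thesis
    unfolding Let_def
    using abs_Hfun_diff_le_rdist[OF grad A1_nonneg A1_lam less_imp_le[OF A2_L] A2] by blast
qed

end
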